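(* Let $\Gamma_n = \log\log(d_n+1) - (n-1)$. Then $\Gamma_n>0$ for all $n\ge1$, and $\Gamma_{n+1}<\Gamma_n$ for all $n\ge 2$.
   Context: All logarithms $\log$ are to base $2$. A delta-matroid $(E,\mathcal F)$ consists of a finite ground set $E$ and a non-empty collection $\mathcal F$ of subsets of $E$ (the feasible sets) satisfying the symmetric exchange axiom: for all $X,Y\in\mathcal F$ and every $e\in X\triangle Y$ there exists $f\in X\triangle Y$ (possibly $f=e$) with $X\triangle\{e,f\}\in\mathcal F$. Let $d_n$ denote the number of labelled delta-matroids with ground set $[n]=\{1,\dots,n\}$, i.e. the number of collections $\mathcal F$ of subsets of $[n]$ such that $([n],\mathcal F)$ is a delta-matroid. *)

theory Defs
  imports Complex_Main
begin

definition delta_matroid :: "'a set \<Rightarrow> 'a set set \<Rightarrow> bool" where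
  "delta_matroid E F \<longleftrightarrow> finite E \<and> F \<noteq> {} \<and> F \<subseteq> Pow E \<and>
     (\<forall>X\<in>F. \<forall>Y\<in>F. \<forall>e\<in>X \<union> Y - (X \<inter> Y).
        \<exists>f\<in>X \<union> Y - (X \<inter> Y). (X - {e, f}) \<union> ({e, f} - X) \<in> F)"

definition d :: "nat \<Rightarrow> nat" where
  "d n = card {F. delta_matroid {1..n} F}"

definition Gamma :: "nat \<Rightarrow> real" where
  "Gamma n = log 2 (log 2 (real (d n) + 1)) - (real n - 1)"

end

theory Submission
  imports Defs
begin

text \<open>
  Lower bound: every family consisting of all odd subsets of a nonempty ground set together with
  an arbitrary collection of even subsets is a delta-matroid, because toggling a single element
  changes the parity of a set while toggling two distinct elements preserves it. Hence
  \<open>d n \<ge> 2^2^(n-1)\<close>, which gives \<open>\<Gamma>\<^sub>n > 0\<close>.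

  Upper bound: a delta-matroid \<open>F\<close> on \<open>E \<union> {m}\<close> is determined by its deletion
  \<open>{X \<in> F. m \<notin> X}\<close> and its contraction \<open>{X - {m} | X \<in> F. m \<in> X}\<close>, each of which is empty or a
  delta-matroid on \<open>E\<close>. The pair \<open>(\<emptyset>, \<emptyset>)\<close> never occurs, nor does \<open>({\<emptyset>}, {E})\<close> once
  \<open>|E| \<ge> 2\<close>, since \<open>{\<emptyset>, E \<union> {m}}\<close> violates the exchange axiom. This gives
  \<open>d (n+1) + 2 \<le> (d n + 1)\<^sup>2\<close>, and taking \<open>log log\<close> yields \<open>\<Gamma>\<^sub>n\<^sub>+\<^sub>1 < \<Gamma>\<^sub>n\<close>.
\<close>

lemma delta_matroidI:
  assumes "finite E" "F \<noteq> {}" "F \<subseteq> Pow E"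
    and "\<And>X Y e. X \<in> F \<Longrightarrow> Y \<in> F \<Longrightarrow> e \<in> X \<union> Y - X \<inter> Y \<Longrightarrow>
           \<exists>f \<in> X \<union> Y - X \<inter> Y. sym_diff X {e, f} \<in> F"
  shows "delta_matroid E F"
  using assms unfolding delta_matroid_def by blast

lemma delta_matroid_exchange:
  assumes "delta_matroid E F" "X \<in> F" "Y \<in> F" "e \<in> X \<union> Y - X \<inter> Y"
  obtains f where "f \<in> X \<union> Y - X \<inter> Y" "sym_diff X {e, f} \<in> F"
  using assms unfolding delta_matroid_def by blast

lemma delta_matroid_subset_Pow: "delta_matroid E F \<Longrightarrow> F \<subseteq> Pow E"
  by (simp add: delta_matroid_def)

lemma delta_matroid_nonempty: "delta_matroid E F \<Longrightarrow> F \<noteq> {}"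
  by (simp add: delta_matroid_def)

lemma delta_matroid_singleton: "finite E \<Longrightarrow> X \<subseteq> E \<Longrightarrow> delta_matroid E {X}"
  by (rule delta_matroidI) auto

lemma finite_delta_matroids: "finite E \<Longrightarrow> finite {F. delta_matroid E F}"
  by (rule finite_subset[of _ "Pow (Pow E)"]) (auto simp: delta_matroid_def)

lemma card_sym_diff:
  assumes "finite X" "finite S"
  shows "card (sym_diff X S) + 2 * card (X \<inter> S) = card X + card S"
proof -
  have "card (sym_diff X S) = card (X - S) + card (S - X)"
    using assms by (intro card_Un_disjoint) auto
  moreover have "card (X - S) + card (X \<inter> S) = card X" "card (S - X) + card (X \<inter> S) = card S"
    using assms card_Diff_subset_Int[of X S] card_Diff_subset_Int[of S X]
    by (simp_all add: card_mono Int_commute)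
  ultimately show ?thesis by linarith
qed

lemma even_card_toggle_pair:
  assumes "finite X"
  shows "even (card (sym_diff X {e, f})) \<longleftrightarrow> (even (card X) \<longleftrightarrow> e \<noteq> f)"
proof -
  have "even (card (sym_diff X {e, f})) \<longleftrightarrow> even (card X + card {e, f})"
    using card_sym_diff[OF assms, of "{e, f}"] by (metis even_add even_mult_iff even_numeral finite.emptyI finite_insert)
  then show ?thesis by (cases "e = f") auto
qed

lemma delta_matroid_odd_subsets_Un:
  assumes "finite E" "E \<noteq> {}" and G: "G \<subseteq> {X. X \<subseteq> E \<and> even (card X)}"
  shows "delta_matroid E ({X. X \<subseteq> E \<and> odd (card X)} \<union> G)" (is "delta_matroid E ?F")
proof (rule delta_matroidI)
  show "finite E" by fact
  obtain x where "x \<in> E" using assms(2) by blast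
  then show "?F \<noteq> {}" by auto
  show "?F \<subseteq> Pow E" using G by auto
  fix X Y e assume X: "X \<in> ?F" and Y: "Y \<in> ?F" and e: "e \<in> X \<union> Y - X \<inter> Y"
  define T where "T f = sym_diff X {e, f}" for f
  have "X \<subseteq> E" "Y \<subseteq> E" using X Y G by auto
  then have TE: "T f \<subseteq> E" if "f \<in> X \<union> Y" for f using e that by (auto simp: T_def)
  have odd_T: "odd (card (T f)) \<longleftrightarrow> (even (card X) \<longleftrightarrow> e = f)" for f
    using even_card_toggle_pair[of X e f] finite_subset[OF \<open>X \<subseteq> E\<close> \<open>finite E\<close>]
    by (simp add: T_def)
  show "\<exists>f \<in> X \<union> Y - X \<inter> Y. T f \<in> ?F"
  proof (cases "even (card X)")
    case True
    then have "T e \<in> ?F" using odd_T[of e] TE[of e] e by auto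
    with e show ?thesis by blast
  next
    case False
    show ?thesis
    proof (cases "\<exists>f \<in> X \<union> Y - X \<inter> Y. f \<noteq> e")
      case True
      then obtain f where f: "f \<in> X \<union> Y - X \<inter> Y" "f \<noteq> e" by blast
      then have "T f \<in> ?F" using \<open>odd (card X)\<close> odd_T[of f] TE[of f] by auto
      with f show ?thesis by blast
    next
      case False
      then have "Y = T e" using e unfolding T_def by blast
      with e Y show ?thesis by blast
    qed
  qed
qed

lemma card_even_subsets:
  assumes "finite E" "E \<noteq> {}"
  shows "card {X. X \<subseteq> E \<and> even (card X)} = 2 ^ (card E - 1)"
proof -
  let ?Ev = "{X. X \<subseteq> E \<and> even (card X)}" and ?Od = "{X. X \<subseteq> E \<and> odd (card X)}"
  have "card ?Ev = card ?Od"
    using card_subsupersets_even_odd[of E "{}"] assms by auto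
  moreover have "card ?Ev + card ?Od = 2 ^ card E"
  proof -
    have "?Ev \<union> ?Od = Pow E" by auto
    then have "card (?Ev \<union> ?Od) = 2 ^ card E" using assms by (simp add: card_Pow)
    then show ?thesis using assms by (subst (asm) card_Un_disjoint) auto
  qed
  moreover have "(2::nat) ^ card E = 2 * 2 ^ (card E - 1)"
    using assms by (cases "card E") auto
  ultimately show ?thesis by linarith
qed

lemma card_delta_matroids_ge:
  assumes "finite E" "E \<noteq> {}"
  shows "2 ^ 2 ^ (card E - 1) \<le> card {F. delta_matroid E F}"
proof -
  let ?Ev = "{X. X \<subseteq> E \<and> even (card X)}" and ?Od = "{X. X \<subseteq> E \<and> odd (card X)}"
  have "inj_on ((\<union>) ?Od) (Pow ?Ev)" by (auto simp: inj_on_def)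
  moreover have "(\<union>) ?Od ` Pow ?Ev \<subseteq> {F. delta_matroid E F}"
    using delta_matroid_odd_subsets_Un[OF assms] by auto
  ultimately have "card (Pow ?Ev) \<le> card {F. delta_matroid E F}"
    using card_inj_on_le finite_delta_matroids assms(1) by blast
  moreover have "card (Pow ?Ev) = 2 ^ 2 ^ (card E - 1)"
    using assms by (simp add: card_Pow card_even_subsets)
  ultimately show ?thesis by simp
qed

definition deletion :: "'a \<Rightarrow> 'a set set \<Rightarrow> 'a set set" where
  "deletion m F = {X \<in> F. m \<notin> X}"

definition contraction :: "'a \<Rightarrow> 'a set set \<Rightarrow> 'a set set" where
  "contraction m F = (\<lambda>X. X - {m}) ` {X \<in> F. m \<in> X}"

lemma insert_image_contraction: "insert m ` contraction m F = {X \<in> F. m \<in> X}"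
proof -
  have "insert m ` contraction m F = (\<lambda>X. insert m (X - {m})) ` {X \<in> F. m \<in> X}"
    by (simp add: contraction_def image_image)
  also have "\<dots> = id ` {X \<in> F. m \<in> X}"
    by (rule image_cong) auto
  finally show ?thesis by simp
qed

lemma deletion_Un_contraction: "deletion m F \<union> insert m ` contraction m F = F"
  by (auto simp: deletion_def insert_image_contraction)

lemma inj_deletion_contraction: "inj (\<lambda>F. (deletion m F, contraction m F))"
proof (rule injI)
  fix F G assume "(deletion m F, contraction m F) = (deletion m G, contraction m G)"
  then have "deletion m F = deletion m G" "contraction m F = contraction m G" by simp_all
  then show "F = G" by (metis deletion_Un_contraction)
qed

lemma delta_matroid_deletion:
  assumes F: "delta_matroid (insert m E) F" and "deletion m F \<noteq> {}"
  shows "delta_matroid E (deletion m F)"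
proof (rule delta_matroidI)
  show "finite E" using F by (simp add: delta_matroid_def)
  show "deletion m F \<noteq> {}" by fact
  show "deletion m F \<subseteq> Pow E"
    using delta_matroid_subset_Pow[OF F] by (auto simp: deletion_def)
  fix X Y e assume "X \<in> deletion m F" "Y \<in> deletion m F" and e: "e \<in> X \<union> Y - X \<inter> Y"
  then have X: "X \<in> F" "m \<notin> X" and Y: "Y \<in> F" "m \<notin> Y" by (auto simp: deletion_def)
  obtain f where "f \<in> X \<union> Y - X \<inter> Y" "sym_diff X {e, f} \<in> F"
    by (rule delta_matroid_exchange[OF F X(1) Y(1) e])
  moreover have "m \<notin> sym_diff X {e, f}"
    using X Y e calculation(1) by auto
  ultimately show "\<exists>f \<in> X \<union> Y - X \<inter> Y. sym_diff X {e, f} \<in> deletion m F"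
    by (auto simp: deletion_def)
qed

lemma delta_matroid_contraction:
  assumes F: "delta_matroid (insert m E) F" and "contraction m F \<noteq> {}"
  shows "delta_matroid E (contraction m F)"
proof (rule delta_matroidI)
  show "finite E" using F by (simp add: delta_matroid_def)
  show "contraction m F \<noteq> {}" by fact
  show "contraction m F \<subseteq> Pow E"
    using delta_matroid_subset_Pow[OF F] by (auto simp: contraction_def)
  fix X' Y' e assume "X' \<in> contraction m F" "Y' \<in> contraction m F" and e: "e \<in> X' \<union> Y' - X' \<inter> Y'"
  then obtain X Y where X: "X \<in> F" "m \<in> X" "X' = X - {m}" and Y: "Y \<in> F" "m \<in> Y" "Y' = Y - {m}"
    by (auto simp: contraction_def)
  have "e \<in> X \<union> Y - X \<inter> Y" using e X Y by auto
  then obtain f where f: "f \<in> X \<union> Y - X \<inter> Y" "sym_diff X {e, f} \<in> F"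
    by (rule delta_matroid_exchange[OF F X(1) Y(1)])
  have "m \<notin> {e, f}" using e f(1) X Y by auto
  then have "sym_diff X' {e, f} = sym_diff X {e, f} - {m}"
    and "m \<in> sym_diff X {e, f}" using X by auto
  then have "sym_diff X' {e, f} \<in> contraction m F"
    using f(2) by (auto simp: contraction_def)
  moreover have "f \<in> X' \<union> Y' - X' \<inter> Y'" using f(1) \<open>m \<notin> {e, f}\<close> X Y by auto
  ultimately show "\<exists>f \<in> X' \<union> Y' - X' \<inter> Y'. sym_diff X' {e, f} \<in> contraction m F"
    by blast
qed

lemma not_delta_matroid_empty_and_ground:
  assumes "card E \<ge> 3"
  shows "\<not> delta_matroid E {{}, E}"
proof
  assume dm: "delta_matroid E {{}, E}"
  from assms have "E \<noteq> {}" by auto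
  then obtain e where "e \<in> {} \<union> E - {} \<inter> E" by auto
  then obtain f where "sym_diff {} {e, f} \<in> {{}, E}"
    by (rule delta_matroid_exchange[OF dm insertI1 insertI2[OF singletonI]])
  then have "E = {e, f}" by auto
  then have "card E \<le> 2" by (simp add: card_insert_if)
  with assms show False by simp
qed

lemma card_delta_matroids_insert_le:
  assumes "finite E" "m \<notin> E" "card E \<ge> 2"
  shows "card {F. delta_matroid (insert m E) F} + 2 \<le> (card {F. delta_matroid E F} + 1)\<^sup>2"
proof -
  let ?D = "{F. delta_matroid E F}" and ?D' = "{F. delta_matroid (insert m E) F}"
  let ?\<phi> = "\<lambda>F. (deletion m F, contraction m F)"
  define P where "P = insert {} ?D"
  let ?Bad = "{({}, {}), ({{}}, {E})}"
  have fin: "finite ?D" "finite P" using finite_delta_matroids[OF assms(1)] by (simp_all add: P_def)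
  have "{} \<notin> ?D" by (simp add: delta_matroid_def)
  then have card_P: "card P = card ?D + 1"
    using fin by (simp add: P_def)
  have bad_in: "?Bad \<subseteq> P \<times> P"
    using assms(1) by (simp add: P_def delta_matroid_singleton)
  have phi_in: "?\<phi> F \<in> P \<times> P - ?Bad" if F: "delta_matroid (insert m E) F" for F
  proof -
    have "deletion m F \<in> P" "contraction m F \<in> P"
      using delta_matroid_deletion[OF F] delta_matroid_contraction[OF F] by (auto simp: P_def)
    moreover have "?\<phi> F \<notin> ?Bad"
    proof
      assume "?\<phi> F \<in> ?Bad"
      then have "deletion m F \<union> insert m ` contraction m F \<in> {{}, {{}, insert m E}}" by auto
      then have "F = {} \<or> F = {{}, insert m E}" by (simp add: deletion_Un_contraction)
      moreover have "card (insert m E) \<ge> 3" using assms by simp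
      ultimately show False
        using F delta_matroid_nonempty not_delta_matroid_empty_and_ground by blast
    qed
    ultimately show ?thesis by (rule DiffI[OF SigmaI])
  qed
  have "?\<phi> ` ?D' \<subseteq> P \<times> P - ?Bad"
    by (rule image_subsetI) (rule phi_in, simp)
  moreover have "inj_on ?\<phi> ?D'" using inj_deletion_contraction by (rule inj_on_subset) simp
  ultimately have "card ?D' \<le> card (P \<times> P - ?Bad)"
    using fin by (intro card_inj_on_le) auto
  also have "\<dots> = card (P \<times> P) - 2"
    using bad_in fin by (simp add: card_Diff_subset)
  finally have "card ?D' + 2 \<le> card (P \<times> P)"
    using card_mono[OF _ bad_in] fin by simp
  also have "\<dots> = (card ?D + 1)\<^sup>2"
    using card_P by (simp add: card_cartesian_product power2_eq_square)
  finally show ?thesis .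
qed

lemma d_ge: "n \<ge> 1 \<Longrightarrow> 2 ^ 2 ^ (n - 1) \<le> d n"
  using card_delta_matroids_ge[of "{1..n}"] by (simp add: d_def)

lemma d_Suc_le: "n \<ge> 2 \<Longrightarrow> d (Suc n) + 2 \<le> (d n + 1)\<^sup>2"
  using card_delta_matroids_insert_le[of "{1..n}" "Suc n"]
  by (simp add: d_def atLeastAtMostSuc_conv)

lemma less_log_log:
  assumes "2 ^ 2 ^ k < x"
  shows "real k < log 2 (log 2 x)"
proof -
  have "2 ^ k = log 2 (2 ^ 2 ^ k)" by simp
  also have "\<dots> < log 2 x" using assms by (intro log_less) auto
  finally have "log 2 (2 ^ k) < log 2 (log 2 x)" by (intro log_less) auto
  then show ?thesis by simp
qed

lemma log_log_less_of_less_square: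
  assumes "1 < a" "1 < b" "b < a\<^sup>2"
  shows "log 2 (log 2 b) < log 2 (log 2 a) + 1"
proof -
  have "0 < log 2 a" using assms by simp
  have "log 2 b < log 2 (a\<^sup>2)" using assms by simp
  also have "\<dots> = 2 * log 2 a" using assms by (simp add: log_nat_power)
  finally have "log 2 (log 2 b) < log 2 (2 * log 2 a)" using assms by simp
  also have "\<dots> = log 2 (log 2 a) + 1"
    using \<open>0 < log 2 a\<close> by (simp add: log_mult)
  finally show ?thesis .
qed

lemma d_pos: "0 < d n"
proof -
  have "{{}} \<in> {F. delta_matroid {1..n} F}" by (simp add: delta_matroid_singleton)
  then show ?thesis
    unfolding d_def using finite_delta_matroids[of "{1..n}"] by (auto simp: card_gt_0_iff)
qed

lemma Gamma_pos:
  assumes "n \<ge> 1"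
  shows "Gamma n > 0"
proof -
  have "2 ^ 2 ^ (n - 1) \<le> real (d n)"
    using d_ge[OF assms] by (metis of_nat_le_iff of_nat_numeral of_nat_power)
  then have "real (n - 1) < log 2 (log 2 (real (d n) + 1))"
    by (intro less_log_log) linarith
  then show ?thesis using assms by (simp add: Gamma_def of_nat_diff)
qed

lemma Gamma_Suc_less:
  assumes "n \<ge> 2"
  shows "Gamma (Suc n) < Gamma n"
proof -
  have "real (d (Suc n) + 2) \<le> real ((d n + 1)\<^sup>2)"
    using d_Suc_le[OF assms] by (simp only: of_nat_le_iff)
  then have "real (d (Suc n)) + 1 < (real (d n) + 1)\<^sup>2" by (simp add: add.commute)
  then have "log 2 (log 2 (real (d (Suc n)) + 1)) < log 2 (log 2 (real (d n) + 1)) + 1"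
    using d_pos[of n] d_pos[of "Suc n"] by (intro log_log_less_of_less_square) auto
  then show ?thesis using assms by (simp add: Gamma_def of_nat_diff)
qed

theorem theorem3p5:
  shows "(\<forall>n::nat. n \<ge> 1 \<longrightarrow> Gamma n > 0) \<and>
         (\<forall>n::nat. n \<ge> 2 \<longrightarrow> Gamma (Suc n) < Gamma n)"
  using Gamma_pos Gamma_Suc_less by blast

end
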